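(* Let $\rho<0$ and $\gamma>0$. Let $X$ and $Y$ be nonnegative random variables, where the support of $X$ has upper endpoint $\beta(\infty)>0$. Let $\alpha\in RV_\rho$ and $a\in RV_\gamma$ be positive functions such that $t\,\mathbb P[Y/a(t)>y]\to y^{-1/\gamma}$ for every $y>0$, and suppose there is a non-null Radon measure $\mu$ on $[0,\infty]\times(0,\infty]$ with $$t\,\mathbb P\left[\left(\frac{\beta(\infty)-X}{\alpha(t)},\frac{Y}{a(t)}\right)\in\cdot\right]\xrightarrow{\ \mathrm v\ }\mu(\cdot)\quad\text{in } M_+([0,\infty]\times(0,\infty]),$$ and such that for each $y>0$, $x\mapsto\mu([0,x]\times(y,\infty])$ is a nondegenerate distribution function. Then $XY$ has a regularly varying tail of index $-1/\gamma$, and for all $z>0$, $$t\,\mathbb P\left[\frac{XY}{a(t)}>z\right]\to z^{-1/\gamma}\beta(\infty)^{1/\gamma}\quad\text{as } t\to\infty.$$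
   Context: $RV_c$ denotes the class of positive measurable functions $f$ with $f(tx)/f(x)\to t^c$ as $x\to\infty$ for all $t>0$; a random variable $W$ has a regularly varying tail of index $-c$ if $\mathbb P[W>\cdot]\in RV_{-c}$. Vague convergence in $M_+(\mathsf S)$ means convergence on relatively compact continuity sets of the limit. *)

theory Defs
  imports "HOL-Probability.Probability"
begin

definition regvar :: "real \<Rightarrow> (real \<Rightarrow> real) \<Rightarrow> bool" where
  "regvar c f \<longleftrightarrow>
     f \<in> borel_measurable (restrict_space borel {0<..}) \<and>
     (\<forall>x>0. f x > 0) \<and>
     (\<forall>t>0. ((\<lambda>x. f (t * x) / f x) \<longlongrightarrow> t powr c) at_top)"

definition Espace :: "(ereal \<times> ereal) set" where
  "Espace = {0..\<infinity>} \<times> {0<..\<infinity>}"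

definition upper_endpoint :: "'a measure \<Rightarrow> ('a \<Rightarrow> real) \<Rightarrow> real \<Rightarrow> bool" where
  "upper_endpoint M X b \<longleftrightarrow>
     measure M {\<omega>\<in>space M. X \<omega> \<le> b} = 1 \<and>
     (\<forall>x<b. measure M {\<omega>\<in>space M. X \<omega> \<le> x} < 1)"

definition radon_on_E :: "(ereal \<times> ereal) measure \<Rightarrow> bool" where
  "radon_on_E \<mu> \<longleftrightarrow>
     sets \<mu> = sets (restrict_space borel Espace) \<and>
     (\<forall>K. compactin (top_of_set Espace) K \<longrightarrow> emeasure \<mu> K < \<infinity>)"

definition vague_conv_E ::
    "(real \<Rightarrow> (ereal \<times> ereal) set \<Rightarrow> real) \<Rightarrow> (ereal \<times> ereal) measure \<Rightarrow> bool" where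
  "vague_conv_E \<nu> \<mu> \<longleftrightarrow>
     (\<forall>A\<in>sets \<mu>.
        compactin (top_of_set Espace) ((top_of_set Espace) closure_of A) \<longrightarrow>
        emeasure \<mu> ((top_of_set Espace) frontier_of A) = 0 \<longrightarrow>
        ((\<lambda>t. \<nu> t A) \<longlongrightarrow> measure \<mu> A) at_top)"

text \<open>F (on [0,infinity)) is a nondegenerate distribution function with total mass L:
  nondecreasing, right-continuous, F(x) -> L as x -> infinity, and not the
  distribution function of a point mass (nor of the zero measure).\<close>
definition nondeg_df :: "(real \<Rightarrow> real) \<Rightarrow> real \<Rightarrow> bool" where
  "nondeg_df F L \<longleftrightarrow>
     mono_on {0..} F \<and> (\<forall>x\<ge>0. continuous (at_right x) F) \<and>
     (F \<longlongrightarrow> L) at_top \<and>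
     (\<exists>x\<ge>0. 0 < F x \<and> F x < L)"

end

theory Submission
  imports Defs
begin

text \<open>Since \<open>X \<le> b\<close> almost surely, \<open>P[XY > z a(t)] \<le> P[Y > (z/b) a(t)]\<close>, which gives the
  upper bound \<open>(z/b) powr (-1/\<gamma>)\<close>. Conversely, with \<open>w = z/(b - \<delta>)\<close> the event \<open>Y > w a(t)\<close> is
  covered by \<open>XY > z a(t)\<close> and \<open>X \<le> b - \<delta>, Y > w a(t)\<close>. As \<open>\<alpha>(t) \<rightarrow> 0\<close>, the latter lies in
  \<open>(b - X)/\<alpha>(t) \<ge> K, Y/a(t) \<ge> w'\<close>, whose scaled probability tends to a \<open>\<mu>\<close>-mass that is small
  for large \<open>K\<close>. That \<open>\<alpha>(t) \<rightarrow> 0\<close> is itself read off the vague limit: nondegeneracy of \<open>\<mu>\<close>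
  prevents \<open>\<alpha>\<close> from being large, and \<open>\<rho> < 0\<close> turns boundedness into decay. Finally, the limits
  \<open>t P[XY > a(t) z] \<rightarrow> C z powr (-1/\<gamma>)\<close>, taken along \<open>t = \<tau>^k\<close> and combined with monotonicity
  of the tail, give its regular variation.\<close>

section \<open>Regular variation\<close>

lemma filterlim_power_at_top_sequentially:
  assumes "\<tau> > (1::real)" shows "filterlim (\<lambda>k. \<tau> ^ k) at_top sequentially"
  unfolding filterlim_at_top eventually_sequentially
proof
  fix Z :: real
  obtain n where "Z < \<tau> ^ n" using real_arch_pow[OF assms] by blast
  then have "\<forall>k\<ge>n. Z \<le> \<tau> ^ k"
    using assms by (meson less_imp_le order_trans power_increasing)
  then show "\<exists>N. \<forall>k\<ge>N. Z \<le> \<tau> ^ k" by blast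
qed

lemma filterlim_divide_const_at_top:
  fixes l :: real assumes "l > 0" shows "filterlim (\<lambda>t. t / l) at_top at_top"
  using filterlim_tendsto_pos_mult_at_top[OF tendsto_const _ filterlim_ident, of "1/l"] assms
  by simp

lemma filterlim_at_top_of_ratio_gt:
  fixes u :: "nat \<Rightarrow> real"
  assumes pos: "\<And>k. u k > 0" and ratio: "(\<lambda>k. u (Suc k) / u k) \<longlonglongrightarrow> L" and "L > 1"
  shows "filterlim u at_top sequentially"
proof -
  define q where "q = (1 + L) / 2"
  have q: "q > 1" "q < L" unfolding q_def using \<open>L > 1\<close> by auto
  obtain K where K: "\<And>k. k \<ge> K \<Longrightarrow> q * u k < u (Suc k)"
    using order_tendstoD(1)[OF ratio q(2)] pos
    by (auto simp: eventually_sequentially pos_less_divide_eq mult.commute)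
  have grow: "q ^ m * u K \<le> u (K + m)" for m
  proof (induction m)
    case (Suc m)
    have "q ^ Suc m * u K \<le> q * u (K + m)" using Suc q by (simp add: mult.assoc)
    also have "\<dots> < u (K + Suc m)" using K[of "K + m"] by simp
    finally show ?case by simp
  qed simp
  have "filterlim (\<lambda>k. u K / q ^ K * q ^ k) at_top sequentially"
    using q pos[of K]
    by (intro filterlim_tendsto_pos_mult_at_top[OF tendsto_const _ filterlim_power_at_top_sequentially])
      auto
  moreover have "eventually (\<lambda>k. u K / q ^ K * q ^ k \<le> u k) sequentially"
    unfolding eventually_sequentially
  proof (intro exI allI impI)
    fix k assume "K \<le> k"
    then have "u K / q ^ K * q ^ k = q ^ (k - K) * u K"
      using q by (simp add: power_diff)
    also have "\<dots> \<le> u k" using grow[of "k - K"] \<open>K \<le> k\<close> by simp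
    finally show "u K / q ^ K * q ^ k \<le> u k" .
  qed
  ultimately show ?thesis by (rule filterlim_at_top_mono)
qed

lemma eventually_at_top_between_terms:
  fixes A :: "nat \<Rightarrow> real"
  assumes A: "filterlim A at_top sequentially" and P: "eventually P sequentially"
  shows "eventually (\<lambda>x. \<exists>k. P k \<and> A k \<le> x \<and> x < A (Suc k)) at_top"
proof -
  obtain K where K: "\<And>k. k \<ge> K \<Longrightarrow> P k" using P unfolding eventually_sequentially by blast
  show ?thesis unfolding eventually_at_top_linorder
  proof (rule exI, intro allI impI)
    fix x assume x: "x \<ge> Max (A ` {..K})"
    obtain N where N: "\<And>k. k \<ge> N \<Longrightarrow> x < A k"
      using filterlim_at_top_dense[THEN iffD1, OF A, rule_format, of x]
      unfolding eventually_sequentially by blast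
    let ?S = "{k. A k \<le> x}"
    have fin: "finite ?S" by (rule finite_subset[of _ "{..<N}"]) (use N in \<open>auto simp: not_less[symmetric]\<close>)
    have "K \<in> ?S" using x Max_ge[of "A ` {..K}" "A K"] by auto
    define k where "k = Max ?S"
    have "k \<in> ?S" "K \<le> k"
      unfolding k_def using Max_in[OF fin] Max_ge[OF fin] \<open>K \<in> ?S\<close> by blast+
    moreover have "Suc k \<notin> ?S" using Max_ge[OF fin, of "Suc k"] unfolding k_def by auto
    ultimately show "\<exists>k. P k \<and> A k \<le> x \<and> x < A (Suc k)" using K by (intro exI[of _ k]) auto
  qed
qed

lemma powr_divide_minus:
  fixes z c s :: real assumes "z > 0" "c > 0"
  shows "(z / c) powr (- s) = z powr (- s) * c powr s"
  using assms by (simp add: powr_divide powr_minus_divide)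

lemma exists_endpoint_margin:
  fixes z b c s :: real
  assumes "z > 0" "b > 0" "c < (z / b) powr s"
  obtains \<delta> where "0 < \<delta>" "\<delta> < b" "c < (z / (b - \<delta>)) powr s"
proof -
  have "((\<lambda>\<delta>. (z / (b - \<delta>)) powr s) \<longlongrightarrow> (z / (b - 0)) powr s) (at_right 0)"
    using assms by (intro tendsto_intros) auto
  then have "eventually (\<lambda>\<delta>. c < (z / (b - \<delta>)) powr s) (at_right 0)"
    using assms by (intro order_tendstoD(1)) simp_all
  moreover have "eventually (\<lambda>\<delta>. \<delta> \<in> {0<..<b}) (at_right 0)"
    using assms(2) by (rule eventually_at_right_real)
  ultimately have "eventually (\<lambda>\<delta>. 0 < \<delta> \<and> \<delta> < b \<and> c < (z / (b - \<delta>)) powr s) (at_right 0)"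
    by eventually_elim auto
  then show thesis using that eventually_happens[of _ "at_right (0::real)"] by auto
qed

lemma regvar_pos: "regvar c f \<Longrightarrow> x > 0 \<Longrightarrow> f x > 0"
  unfolding regvar_def by blast

lemma regvar_tendsto_ratio:
  "regvar c f \<Longrightarrow> t > 0 \<Longrightarrow> ((\<lambda>x. f (t * x) / f x) \<longlongrightarrow> t powr c) at_top"
  unfolding regvar_def by blast

lemma regvar_neg_tendsto_zero:
  assumes f: "regvar \<rho> f" and "\<rho> < 0" and bounded: "eventually (\<lambda>t. f t < B) at_top"
  shows "(f \<longlongrightarrow> 0) at_top"
proof (rule order_tendstoI)
  fix c :: real assume "c < 0"
  show "eventually (\<lambda>t. c < f t) at_top"
    using eventually_gt_at_top[of 0] by eventually_elim (use regvar_pos[OF f] \<open>c < 0\<close> in force)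
next
  fix c :: real assume c: "c > 0"
  define B' where "B' = max B 1"
  define l where "l = (c / (2 * B')) powr (1 / \<rho>)"
  have l: "l > 0" "l powr \<rho> = c / (2 * B')"
    unfolding l_def B'_def using c \<open>\<rho> < 0\<close> by (auto simp: powr_powr)
  have "eventually (\<lambda>s. f (l * s) / f s < 2 * l powr \<rho>) at_top"
    using l(1) by (intro order_tendstoD(2)[OF regvar_tendsto_ratio[OF f]]) simp_all
  then have "eventually (\<lambda>s. f (l * s) < c) at_top"
    using bounded eventually_gt_at_top[of 0]
  proof eventually_elim
    case (elim s)
    have "f (l * s) < 2 * l powr \<rho> * f s"
      using elim regvar_pos[OF f, of s] by (simp add: divide_less_eq)
    also have "\<dots> \<le> 2 * l powr \<rho> * B'"
      using elim(2) unfolding B'_def by (intro mult_left_mono) auto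
    also have "\<dots> = c" unfolding l(2) B'_def by simp
    finally show ?case .
  qed
  from eventually_compose_filterlim[OF this filterlim_divide_const_at_top[OF l(1)]]
  show "eventually (\<lambda>t. f t < c) at_top" using l(1) by simp
qed

lemma regvar_geometric_ratio:
  assumes "regvar \<gamma> a" "\<tau> > 1"
  shows "(\<lambda>k. a (\<tau> ^ Suc k) / a (\<tau> ^ k)) \<longlonglongrightarrow> \<tau> powr \<gamma>"
  using filterlim_compose[OF regvar_tendsto_ratio[OF assms(1), of \<tau>]
      filterlim_power_at_top_sequentially[OF assms(2)]] assms(2)
  by simp

lemma regvar_geometric_filterlim_at_top:
  assumes a: "regvar \<gamma> a" "\<gamma> > 0" and "\<tau> > 1"
  shows "filterlim (\<lambda>k. a (\<tau> ^ k)) at_top sequentially"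
proof (rule filterlim_at_top_of_ratio_gt)
  show "a (\<tau> ^ k) > 0" for k using regvar_pos[OF a(1)] \<open>\<tau> > 1\<close> by simp
  show "(\<lambda>k. a (\<tau> ^ Suc k) / a (\<tau> ^ k)) \<longlonglongrightarrow> \<tau> powr \<gamma>"
    by (rule regvar_geometric_ratio[OF a(1) \<open>\<tau> > 1\<close>])
  show "\<tau> powr \<gamma> > 1" using a(2) \<open>\<tau> > 1\<close> by (simp add: gr_one_powr)
qed

lemma antimono_scaled_tail_pos:
  fixes T a :: "real \<Rightarrow> real"
  assumes T: "antimono T" and a: "regvar \<gamma> a" "\<gamma> > 0"
    and lim: "((\<lambda>t. t * T (a t)) \<longlongrightarrow> L) at_top" "L > 0" and "z > 0"
  shows "T z > 0"
proof -
  have "(\<lambda>k. 2 ^ k * T (a (2 ^ k))) \<longlonglongrightarrow> L"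
    using filterlim_compose[OF lim(1) filterlim_power_at_top_sequentially, of 2] by simp
  from order_tendstoD(1)[OF this lim(2)]
  have "eventually (\<lambda>k. 2 ^ k * T (a (2 ^ k)) > 0 \<and> z \<le> a (2 ^ k)) sequentially"
    using regvar_geometric_filterlim_at_top[OF a, of 2]
    by (intro eventually_conj) (simp_all add: filterlim_at_top)
  then obtain k :: nat where k: "2 ^ k * T (a (2 ^ k)) > 0" "z \<le> a (2 ^ k)"
    by (auto dest: eventually_happens)
  have "0 < T (a (2 ^ k))" using k(1) by (simp add: zero_less_mult_iff)
  also have "\<dots> \<le> T z" using antimonoD[OF T k(2)] .
  finally show ?thesis .
qed

lemma exists_powr_close_to_one:
  fixes L e s :: real
  assumes "e > 0"
  obtains r where "r > 1" "L * r powr s < L + e" "L - e < L * r powr (- s)"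
proof -
  have "((\<lambda>r. L * r powr s) \<longlongrightarrow> L * 1 powr s) (at_right 1)"
    "((\<lambda>r. L * r powr (- s)) \<longlongrightarrow> L * 1 powr (- s)) (at_right 1)"
    by (intro tendsto_intros; simp)+
  then have up: "((\<lambda>r. L * r powr s) \<longlongrightarrow> L) (at_right 1)"
    and down: "((\<lambda>r. L * r powr (- s)) \<longlongrightarrow> L) (at_right 1)"
    by simp_all
  have "eventually (\<lambda>r. 1 < r \<and> L * r powr s < L + e \<and> L - e < L * r powr (- s)) (at_right 1)"
    using assms eventually_at_right_less[of "1::real"]
      order_tendstoD(2)[OF up, of "L + e"] order_tendstoD(1)[OF down, of "L - e"]
    by (auto intro!: eventually_conj)
  then show thesis using that eventually_happens[of _ "at_right (1::real)"] by auto
qed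

lemma scaled_tail_quotient_geometric:
  fixes T a :: "real \<Rightarrow> real"
  assumes lim: "\<And>z. z > 0 \<Longrightarrow> ((\<lambda>t. t * T (a t * z)) \<longlongrightarrow> C * z powr (-1/\<gamma>)) at_top"
    and "C > 0" "\<tau> > 1" "c > 0" "d > 0"
  shows "(\<lambda>k. T (a (\<tau> ^ k) * c) / T (a (\<tau> ^ k) * d)) \<longlonglongrightarrow> c powr (-1/\<gamma>) * d powr (1/\<gamma>)"
proof -
  have seq: "(\<lambda>k. \<tau> ^ k * T (a (\<tau> ^ k) * z)) \<longlonglongrightarrow> C * z powr (-1/\<gamma>)" if "z > 0" for z
    using filterlim_compose[OF lim[OF that] filterlim_power_at_top_sequentially[OF \<open>\<tau> > 1\<close>]] .
  have "(\<lambda>k. (\<tau> ^ k * T (a (\<tau> ^ k) * c)) / (\<tau> ^ k * T (a (\<tau> ^ k) * d)))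
      \<longlonglongrightarrow> (C * c powr (-1/\<gamma>)) / (C * d powr (-1/\<gamma>))"
    using assms by (intro tendsto_divide seq) auto
  moreover have "(\<tau> ^ k * T (a (\<tau> ^ k) * c)) / (\<tau> ^ k * T (a (\<tau> ^ k) * d))
      = T (a (\<tau> ^ k) * c) / T (a (\<tau> ^ k) * d)" for k
    using \<open>\<tau> > 1\<close> by simp
  moreover have "(C * c powr (-1/\<gamma>)) / (C * d powr (-1/\<gamma>)) = c powr (-1/\<gamma>) * d powr (1/\<gamma>)"
    using assms by (simp add: powr_minus field_simps)
  ultimately show ?thesis by simp
qed

lemma antimono_quotient_bounds:
  fixes T :: "real \<Rightarrow> real"
  assumes T: "antimono T" and T_pos: "\<And>z. z > 0 \<Longrightarrow> T z > 0"
    and "u > 0" "l > 0" "r > 0" "u \<le> x" "x \<le> u * r"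
  shows "T (u * (l * r)) / T u \<le> T (l * x) / T x" "T (l * x) / T x \<le> T (u * l) / T (u * r)"
proof -
  have "x > 0" using assms by simp
  show "T (u * (l * r)) / T u \<le> T (l * x) / T x"
  proof (rule frac_le)
    show "0 \<le> T (l * x)" using T_pos assms \<open>x > 0\<close> by (simp add: less_imp_le)
    show "T (u * (l * r)) \<le> T (l * x)"
      using mult_left_mono[OF \<open>x \<le> u * r\<close>, of l] assms by (intro antimonoD[OF T]) (simp add: mult_ac)
    show "0 < T x" using T_pos \<open>x > 0\<close> by simp
    show "T x \<le> T u" using \<open>u \<le> x\<close> by (rule antimonoD[OF T])
  qed
  show "T (l * x) / T x \<le> T (u * l) / T (u * r)"
  proof (rule frac_le)
    show "0 \<le> T (u * l)" using T_pos assms by (simp add: less_imp_le)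
    show "T (l * x) \<le> T (u * l)"
      using \<open>u \<le> x\<close> \<open>l > 0\<close> by (intro antimonoD[OF T]) (simp add: mult.commute)
    show "0 < T (u * r)" using T_pos assms by simp
    show "T (u * r) \<le> T x" using \<open>x \<le> u * r\<close> by (rule antimonoD[OF T])
  qed
qed

text \<open>Every large \<open>x\<close> lies between consecutive terms of \<open>A k = a (\<tau>^k)\<close>, whose ratio tends to
  \<open>\<tau> powr \<gamma> < r\<close>; monotonicity of \<open>T\<close> then traps \<open>T (l x) / T x\<close> between two quotients that
  converge to \<open>l powr (-1/\<gamma>) * r powr (\<plusminus>1/\<gamma>)\<close>.\<close>
lemma antimono_scaled_tail_ratio:
  fixes T a :: "real \<Rightarrow> real"
  assumes T: "antimono T" and a: "regvar \<gamma> a" and \<gamma>: "\<gamma> > 0" and C: "C > 0"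
    and lim: "\<And>z. z > 0 \<Longrightarrow> ((\<lambda>t. t * T (a t * z)) \<longlongrightarrow> C * z powr (-1/\<gamma>)) at_top"
    and l: "l > 0"
  shows "((\<lambda>x. T (l * x) / T x) \<longlongrightarrow> l powr (-1/\<gamma>)) at_top"
proof (rule tendstoI)
  fix e :: real assume e: "e > 0"
  define L where "L = l powr (-1/\<gamma>)"
  have T_pos: "T z > 0" if "z > 0" for z
    using antimono_scaled_tail_pos[OF T a \<gamma> _ _ that] lim[of 1] C by simp
  obtain r where r: "r > 1" "L * r powr (1/\<gamma>) < L + e" "L - e < L * r powr (- (1/\<gamma>))"
    using exists_powr_close_to_one[OF e] by blast
  define \<tau> where "\<tau> = r powr (1 / (2 * \<gamma>))"
  have \<tau>: "\<tau> > 1" unfolding \<tau>_def using r \<gamma> by (simp add: gr_one_powr)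
  have "\<tau> powr \<gamma> = r powr (1/2)" unfolding \<tau>_def using \<gamma> by (simp add: powr_powr)
  also have "\<dots> < r" using r powr_less_mono[of "1/2" 1 r] by simp
  finally have \<tau>_r: "\<tau> powr \<gamma> < r" .
  define A where "A k = a (\<tau> ^ k)" for k
  have A_pos: "A k > 0" for k unfolding A_def using regvar_pos[OF a] \<tau> by simp
  have A_top: "filterlim A at_top sequentially"
    unfolding A_def by (rule regvar_geometric_filterlim_at_top[OF a \<gamma> \<tau>])
  have "eventually (\<lambda>k. A (Suc k) < r * A k \<and> T (A k * l) / T (A k * r) < L + e
      \<and> L - e < T (A k * (l * r)) / T (A k)) sequentially"
  proof (intro eventually_conj)
    show "eventually (\<lambda>k. A (Suc k) < r * A k) sequentially"
      using order_tendstoD(2)[OF regvar_geometric_ratio[OF a \<tau>] \<tau>_r] A_pos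
      unfolding A_def by (simp add: divide_less_eq)
    have "(\<lambda>k. T (A k * l) / T (A k * r)) \<longlonglongrightarrow> L * r powr (1/\<gamma>)"
      using scaled_tail_quotient_geometric[OF lim C \<tau> l, of r] r(1)
      unfolding A_def L_def by simp
    from order_tendstoD(2)[OF this r(2)]
    show "eventually (\<lambda>k. T (A k * l) / T (A k * r) < L + e) sequentially" .
    have "(\<lambda>k. T (A k * (l * r)) / T (A k)) \<longlonglongrightarrow> L * r powr (- (1/\<gamma>))"
      using scaled_tail_quotient_geometric[OF lim C \<tau>, of "l * r" 1] l r(1)
      unfolding A_def L_def by (simp add: powr_mult)
    from order_tendstoD(1)[OF this r(3)]
    show "eventually (\<lambda>k. L - e < T (A k * (l * r)) / T (A k)) sequentially" .
  qed
  from eventually_at_top_between_terms[OF A_top this]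
  show "eventually (\<lambda>x. dist (T (l * x) / T x) L < e) at_top"
  proof eventually_elim
    case (elim x)
    then obtain k where k: "A (Suc k) < r * A k" "T (A k * l) / T (A k * r) < L + e"
      "L - e < T (A k * (l * r)) / T (A k)" "A k \<le> x" "x < A (Suc k)"
      by blast
    have "x \<le> A k * r" using k(1,5) by (simp add: mult.commute)
    from antimono_quotient_bounds[OF T T_pos A_pos l _ k(4) this] r(1) k(2,3)
    show ?case by (simp add: dist_real_def abs_less_iff)
  qed
qed

lemma regvar_of_scaled_tail_limit:
  fixes T a :: "real \<Rightarrow> real"
  assumes T: "antimono T" and a: "regvar \<gamma> a" and \<gamma>: "\<gamma> > 0" and C: "C > 0"
    and lim: "\<And>z. z > 0 \<Longrightarrow> ((\<lambda>t. t * T (a t * z)) \<longlongrightarrow> C * z powr (-1/\<gamma>)) at_top"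
  shows "regvar (-1/\<gamma>) T"
  unfolding regvar_def
proof (intro conjI allI impI)
  have "mono (\<lambda>z. - T z)" using T unfolding mono_def antimono_def by simp
  then have "(\<lambda>z. - (- T z)) \<in> borel_measurable borel"
    by (intro borel_measurable_uminus borel_measurable_mono)
  then show "T \<in> borel_measurable (restrict_space borel {0<..})"
    by (intro measurable_restrict_space1) simp
  show "T z > 0" if "z > 0" for z
    using antimono_scaled_tail_pos[OF T a \<gamma> _ _ that] lim[of 1] C by simp
  show "((\<lambda>x. T (l * x) / T x) \<longlongrightarrow> l powr (-1/\<gamma>)) at_top" if "l > 0" for l
    by (rule antimono_scaled_tail_ratio[OF T a \<gamma> C lim that])
qed

section \<open>Measures on \<open>Espace\<close>\<close>

lemma compact_ereal_atLeastAtMost: "compact {a..b::ereal}"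
  using compact_Int_closed[OF compact_UNIV closed_atLeastAtMost[of a b]] by simp

lemma countable_non_null_disjoint_family:
  fixes S :: "real \<Rightarrow> 'b set"
  assumes C: "C \<in> sets \<mu>" "emeasure \<mu> C < \<infinity>"
    and S: "\<And>r. S r \<in> sets \<mu>" "\<And>r. S r \<subseteq> C" "\<And>r s. r \<noteq> s \<Longrightarrow> S r \<inter> S s = {}"
  shows "countable {r. emeasure \<mu> (S r) \<noteq> 0}"
proof -
  let ?m = "\<lambda>r. measure \<mu> (S r)"
  have S_fin: "emeasure \<mu> (S r) \<noteq> \<infinity>" for r
    using le_less_trans[OF emeasure_mono[OF S(2)[of r] C(1)] C(2)] by (simp add: less_top)
  have eq: "{r. emeasure \<mu> (S r) \<noteq> 0} = (\<Union>n. {r. 1 / Suc n < ?m r})"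
  proof safe
    fix r assume "emeasure \<mu> (S r) \<noteq> 0"
    moreover have "emeasure \<mu> (S r) = ennreal (?m r)"
      using S_fin[of r] by (simp add: emeasure_eq_ennreal_measure)
    ultimately have "?m r \<noteq> 0" by auto
    then have "?m r > 0" using measure_nonneg[of \<mu> "S r"] by linarith
    then obtain n where "1 / Suc n < ?m r" by (rule nat_approx_posE)
    then show "r \<in> (\<Union>n. {r. 1 / Suc n < ?m r})" by blast
  qed (simp add: measure_def)
  have "finite {r. 1 / Suc n < ?m r}" for n
  proof (rule ccontr)
    assume "infinite {r. 1 / Suc n < ?m r}"
    then obtain R where R: "finite R" "card R = Suc n * (nat \<lceil>measure \<mu> C\<rceil> + 1)"
        "R \<subseteq> {r. 1 / Suc n < ?m r}"
      by (meson infinite_arbitrarily_large)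
    have "real (card R) = real (Suc n) * real (nat \<lceil>measure \<mu> C\<rceil> + 1)"
      using R(2) by (metis of_nat_mult)
    then have "real (nat \<lceil>measure \<mu> C\<rceil> + 1) = (\<Sum>r\<in>R. 1 / real (Suc n))"
      by simp
    also have "\<dots> \<le> (\<Sum>r\<in>R. ?m r)" using R(3) by (intro sum_mono) (auto intro: less_imp_le)
    also have "\<dots> = measure \<mu> (\<Union>r\<in>R. S r)"
      using R(1) S(1,3) S_fin
      by (intro measure_finite_Union[symmetric]) (auto simp: disjoint_family_on_def)
    also have "\<dots> \<le> measure \<mu> C"
    proof (rule measure_mono_fmeasurable)
      show "(\<Union>r\<in>R. S r) \<subseteq> C" using S(2) by blast
      show "(\<Union>r\<in>R. S r) \<in> sets \<mu>" using R(1) S(1) by blast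
      show "C \<in> fmeasurable \<mu>" using C by (simp add: fmeasurable_def)
    qed
    finally have "real (nat \<lceil>measure \<mu> C\<rceil> + 1) \<le> measure \<mu> C" .
    moreover have "measure \<mu> C \<le> real (nat \<lceil>measure \<mu> C\<rceil>)" by linarith
    ultimately show False by linarith
  qed
  then show ?thesis unfolding eq by (intro countable_UN countableI_type countable_finite)
qed

lemma exists_null_between:
  fixes S :: "real \<Rightarrow> 'b set"
  assumes "countable {r. emeasure \<mu> (S r) \<noteq> 0}" "c < d"
  obtains r where "c < r" "r < d" "emeasure \<mu> (S r) = 0"
proof -
  have "\<not> {c<..<d} \<subseteq> {r. emeasure \<mu> (S r) \<noteq> 0}"
  proof
    assume "{c<..<d} \<subseteq> {r. emeasure \<mu> (S r) \<noteq> 0}"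
    with assms(1) have "countable {c<..<d}" by (rule countable_subset[rotated])
    with assms(2) show False using uncountable_open_interval by blast
  qed
  then show thesis using that by auto
qed

lemma ereal_nonneg_if_ge: "0 \<le> c \<Longrightarrow> ereal c \<le> u \<Longrightarrow> 0 \<le> u"
  using order_trans[of 0 "ereal c" u] by simp

lemma ereal_nonneg_if_gt: "0 \<le> c \<Longrightarrow> ereal c < u \<Longrightarrow> 0 \<le> u"
  using ereal_nonneg_if_ge less_imp_le by blast

lemma ereal_pos_if_ge: "0 < c \<Longrightarrow> ereal c \<le> u \<Longrightarrow> 0 < u"
  using less_le_trans[of 0 "ereal c" u] by simp

lemma ereal_greaterThan_subset_atLeast:
  "c \<le> d \<Longrightarrow> {ereal d<..\<infinity>} \<subseteq> {ereal c..\<infinity>}"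
proof
  fix x assume "c \<le> d" "x \<in> {ereal d<..\<infinity>}"
  then show "x \<in> {ereal c..\<infinity>}" by (cases x) auto
qed

lemma ereal_atLeast_subset_greaterThan:
  "c < d \<Longrightarrow> {ereal d..\<infinity>} \<subseteq> {ereal c<..\<infinity>}"
proof
  fix x assume "c < d" "x \<in> {ereal d..\<infinity>}"
  then show "x \<in> {ereal c<..\<infinity>}" by (cases x) auto
qed

lemma sets_borel_Times_ereal:
  fixes A B :: "ereal set"
  assumes "A \<in> sets borel" "B \<in> sets borel"
  shows "A \<times> B \<in> sets (borel :: (ereal \<times> ereal) measure)"
  using pair_measureI[OF assms] unfolding borel_prod .

lemma radon_on_E_emeasure_finite:
  assumes "radon_on_E \<mu>" "compact K" "K \<subseteq> Espace"
  shows "emeasure \<mu> K < \<infinity>"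
  using assms unfolding radon_on_E_def by (simp add: compactin_subtopology)

lemma vague_conv_E_tendsto_closed:
  assumes V: "vague_conv_E \<nu> \<mu>" and rad: "radon_on_E \<mu>"
    and R: "closed R" "compact R" "R \<subseteq> Espace" and U: "open U" "U \<inter> Espace \<subseteq> R"
    and N: "N \<in> sets \<mu>" "R - U \<subseteq> N" "emeasure \<mu> N = 0"
  shows "((\<lambda>t. \<nu> t R) \<longlongrightarrow> measure \<mu> R) at_top"
proof -
  let ?E = "top_of_set Espace"
  have R_closedin: "closedin ?E R" using R(1,3) closedin_closed by blast
  have "R \<in> sets \<mu>"
    using R(3) borel_closed[OF R(1)] rad[unfolded radon_on_E_def, THEN conjunct1]
    unfolding sets_restrict_space by (auto intro!: image_eqI[where x=R])
  moreover have "compactin ?E (?E closure_of R)"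
    using R R_closedin by (simp add: closure_of_closedin compactin_subtopology)
  moreover have "emeasure \<mu> (?E frontier_of R) = 0"
  proof -
    have "openin ?E (U \<inter> Espace)" using U(1) openin_open by blast
    then have "U \<inter> Espace \<subseteq> ?E interior_of R" using U(2) interior_of_maximal by blast
    then have "?E frontier_of R \<subseteq> N"
      using N(2) R(3) unfolding frontier_of_def closure_of_closedin[OF R_closedin] by blast
    then show ?thesis using emeasure_mono[OF _ N(1)] N(3) by (metis le_zero_eq)
  qed
  ultimately show ?thesis using V unfolding vague_conv_E_def by blast
qed

lemma Times_subset_Espace:
  assumes "y > 0" "A \<subseteq> {0..\<infinity>}" "B \<subseteq> {ereal y..\<infinity>}"
  shows "A \<times> B \<subseteq> Espace"
proof clarify
  fix u v assume "u \<in> A" "v \<in> B"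
  with assms have "0 \<le> u" "0 < v" using ereal_pos_if_ge[of y v] by auto
  then show "(u, v) \<in> Espace" unfolding Espace_def by simp
qed

section \<open>The tail of \<open>X Y\<close>\<close>

locale cev_product = prob_space M
  for M :: "'a measure" +
  fixes X Y :: "'a \<Rightarrow> real" and \<rho> \<gamma> b :: real and \<alpha> a :: "real \<Rightarrow> real"
    and \<mu> :: "(ereal \<times> ereal) measure"
  assumes \<rho>: "\<rho> < 0" and \<gamma>: "\<gamma> > 0"
    and X_measurable[measurable]: "X \<in> borel_measurable M"
    and Y_measurable[measurable]: "Y \<in> borel_measurable M"
    and X_nonneg: "\<And>\<omega>. \<omega> \<in> space M \<Longrightarrow> X \<omega> \<ge> 0"
    and Y_nonneg: "\<And>\<omega>. \<omega> \<in> space M \<Longrightarrow> Y \<omega> \<ge> 0"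
    and endpoint: "upper_endpoint M X b" and b: "b > 0"
    and \<alpha>: "regvar \<rho> \<alpha>" and a: "regvar \<gamma> a"
    and Y_tail: "\<And>y. y > 0 \<Longrightarrow>
      ((\<lambda>t. t * prob {\<omega>\<in>space M. Y \<omega> / a t > y}) \<longlongrightarrow> y powr (-1/\<gamma>)) at_top"
    and radon: "radon_on_E \<mu>"
    and vague: "vague_conv_E (\<lambda>t A. t * prob {\<omega>\<in>space M.
                     (ereal ((b - X \<omega>) / \<alpha> t), ereal (Y \<omega> / a t)) \<in> A}) \<mu>"
    and nondeg: "\<And>y. y > 0 \<Longrightarrow> nondeg_df (\<lambda>x. measure \<mu> ({0..ereal x} \<times> {ereal y<..\<infinity>}))
                         (measure \<mu> ({0..\<infinity>} \<times> {ereal y<..\<infinity>}))"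
begin

definition \<nu> :: "real \<Rightarrow> (ereal \<times> ereal) set \<Rightarrow> real" where
  "\<nu> t A = t * prob {\<omega>\<in>space M. (ereal ((b - X \<omega>) / \<alpha> t), ereal (Y \<omega> / a t)) \<in> A}"

lemma \<nu>_Times: "\<nu> t (A \<times> B) =
    t * prob {\<omega>\<in>space M. ereal ((b - X \<omega>) / \<alpha> t) \<in> A \<and> ereal (Y \<omega> / a t) \<in> B}"
  unfolding \<nu>_def by simp

lemma prob_X_gt_endpoint: "prob {\<omega>\<in>space M. X \<omega> > b} = 0"
proof -
  have "{\<omega>\<in>space M. X \<omega> > b} = space M - {\<omega>\<in>space M. X \<omega> \<le> b}" by auto
  then show ?thesis
    using endpoint prob_compl[of "{\<omega>\<in>space M. X \<omega> \<le> b}"] unfolding upper_endpoint_def by simp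
qed

lemma Times_in_sets_\<mu>:
  assumes "A \<in> sets borel" "B \<in> sets borel" "y > 0" "A \<subseteq> {0..\<infinity>}" "B \<subseteq> {ereal y..\<infinity>}"
  shows "A \<times> B \<in> sets \<mu>"
  using radon[unfolded radon_on_E_def, THEN conjunct1]
    sets_borel_Times_ereal[OF assms(1,2)] Times_subset_Espace[OF assms(3-5)]
  unfolding sets_restrict_space by (auto intro!: image_eqI[where x="A \<times> B"])

lemma Times_fmeasurable:
  assumes "A \<in> sets borel" "B \<in> sets borel" "y > 0" "A \<subseteq> {0..\<infinity>}" "B \<subseteq> {ereal y..\<infinity>}"
  shows "A \<times> B \<in> fmeasurable \<mu>"
proof -
  let ?K = "{0..\<infinity>} \<times> {ereal y..\<infinity>}"
  have "emeasure \<mu> ?K < \<infinity>"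
    using assms(3) by (intro radon_on_E_emeasure_finite[OF radon] compact_Times
        compact_ereal_atLeastAtMost Times_subset_Espace) auto
  moreover have "emeasure \<mu> (A \<times> B) \<le> emeasure \<mu> ?K"
    using assms by (intro emeasure_mono Times_in_sets_\<mu>[of _ _ y]) auto
  ultimately show ?thesis
    using Times_in_sets_\<mu>[OF assms] by (auto simp: fmeasurable_def)
qed

lemma exists_null_row:
  assumes "0 < c" "c \<le> p" "p < q"
  obtains y where "p < y" "y < q" "emeasure \<mu> ({0..\<infinity>} \<times> {ereal y}) = 0"
proof -
  let ?S = "\<lambda>r. {0..\<infinity>} \<times> ({ereal c..\<infinity>} \<inter> {ereal r})"
  have "countable {r. emeasure \<mu> (?S r) \<noteq> 0}"
  proof (rule countable_non_null_disjoint_family)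
    have "{0..\<infinity>} \<times> {ereal c..\<infinity>} \<in> fmeasurable \<mu>"
      using assms by (intro Times_fmeasurable[of _ _ c]) auto
    then show "{0..\<infinity>} \<times> {ereal c..\<infinity>} \<in> sets \<mu>" "emeasure \<mu> ({0..\<infinity>} \<times> {ereal c..\<infinity>}) < \<infinity>"
      by (auto simp: fmeasurable_def)
    show "?S r \<in> sets \<mu>" for r
      using assms by (intro Times_in_sets_\<mu>[of _ _ c]) auto
  qed auto
  then obtain y where "p < y" "y < q" "emeasure \<mu> (?S y) = 0"
    by (rule exists_null_between[OF _ \<open>p < q\<close>])
  moreover have "?S y = {0..\<infinity>} \<times> {ereal y}" using \<open>p < y\<close> assms by auto
  ultimately show thesis using that by metis
qed

lemma exists_null_column:
  assumes "0 < y" "0 \<le> p" "p < q"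
  obtains x where "p < x" "x < q" "emeasure \<mu> ({ereal x} \<times> {ereal y..\<infinity>}) = 0"
proof -
  let ?S = "\<lambda>r. ({0..\<infinity>} \<inter> {ereal r}) \<times> {ereal y..\<infinity>}"
  have "countable {r. emeasure \<mu> (?S r) \<noteq> 0}"
  proof (rule countable_non_null_disjoint_family)
    have "{0..\<infinity>} \<times> {ereal y..\<infinity>} \<in> fmeasurable \<mu>"
      using assms by (intro Times_fmeasurable[of _ _ y]) auto
    then show "{0..\<infinity>} \<times> {ereal y..\<infinity>} \<in> sets \<mu>" "emeasure \<mu> ({0..\<infinity>} \<times> {ereal y..\<infinity>}) < \<infinity>"
      by (auto simp: fmeasurable_def)
    show "?S r \<in> sets \<mu>" for r
      using assms by (intro Times_in_sets_\<mu>[of _ _ y]) auto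
  qed auto
  then obtain x where "p < x" "x < q" "emeasure \<mu> (?S x) = 0"
    by (rule exists_null_between[OF _ \<open>p < q\<close>])
  moreover have "?S x = {ereal x} \<times> {ereal y..\<infinity>}" using \<open>p < x\<close> assms by auto
  ultimately show thesis using that by metis
qed

text \<open>The boundary of the rectangle relative to \<open>Espace\<close> consists of the bottom edge and
  of those vertical edges that lie in the interior \<open>0 < x < \<infinity>\<close>.\<close>
lemma \<nu>_rectangle_tendsto:
  fixes p q :: ereal
  assumes y: "y > 0" and p: "0 \<le> p" and pq: "p \<le> q"
    and left: "0 < p \<Longrightarrow> emeasure \<mu> ({p} \<times> {ereal y..\<infinity>}) = 0"
    and right: "q < \<infinity> \<Longrightarrow> emeasure \<mu> ({q} \<times> {ereal y..\<infinity>}) = 0"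
    and bottom: "emeasure \<mu> ({0..\<infinity>} \<times> {ereal y}) = 0"
  shows "((\<lambda>t. \<nu> t ({p..q} \<times> {ereal y..\<infinity>})) \<longlongrightarrow> measure \<mu> ({p..q} \<times> {ereal y..\<infinity>})) at_top"
proof (rule vague_conv_E_tendsto_closed[OF vague[folded \<nu>_def[abs_def]] radon])
  let ?R = "{p..q} \<times> {ereal y..\<infinity>}"
  let ?U = "((if p = 0 then UNIV else {p<..}) \<inter> (if q = \<infinity> then UNIV else {..<q})) \<times> {ereal y<..}"
  let ?N = "({p} \<inter> {0<..}) \<times> {ereal y..\<infinity>} \<union> ({q} \<inter> {..<\<infinity>}) \<times> {ereal y..\<infinity>} \<union> {0..\<infinity>} \<times> {ereal y}"
  show "closed ?R" by (intro closed_Times closed_atLeastAtMost closed_atLeast)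
  show "compact ?R"
    by (intro compact_Times compact_ereal_atLeastAtMost)
  show "?R \<subseteq> Espace" using y p by (intro Times_subset_Espace) auto
  show "open ?U" by (intro open_Times open_Int open_greaterThan) (auto simp: open_lessThan)
  show "?U \<inter> Espace \<subseteq> ?R" by (auto simp: Espace_def split: if_splits)
  show "?R - ?U \<subseteq> ?N"
  proof
    fix z assume z: "z \<in> ?R - ?U"
    then have "0 \<le> fst z" using p by (auto intro: order_trans)
    with z show "z \<in> ?N" using p by (cases z) (auto simp: not_less split: if_splits)
  qed
  show "?N \<in> sets \<mu>"
    using y p pq by (intro sets.Un Times_in_sets_\<mu>[of _ _ y]) auto
  have "emeasure \<mu> ?N \<le> emeasure \<mu> (({p} \<inter> {0<..}) \<times> {ereal y..\<infinity>})
      + emeasure \<mu> (({q} \<inter> {..<\<infinity>}) \<times> {ereal y..\<infinity>}) + emeasure \<mu> ({0..\<infinity>} \<times> {ereal y})"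
    using y p pq by (intro order_trans[OF emeasure_subadditive] add_right_mono emeasure_subadditive
        Times_in_sets_\<mu>[of _ _ y] sets.Un) auto
  also have "\<dots> = 0" using left right bottom by (cases "0 < p"; cases "q < \<infinity>") auto
  finally show "emeasure \<mu> ?N = 0" by simp
qed

lemma measure_upper_rectangle_eq:
  assumes y: "y > 0" and x: "x \<ge> 0"
  shows "measure \<mu> ({ereal x<..\<infinity>} \<times> {ereal y<..\<infinity>}) =
    measure \<mu> ({0..\<infinity>} \<times> {ereal y<..\<infinity>}) - measure \<mu> ({0..ereal x} \<times> {ereal y<..\<infinity>})"
proof -
  let ?P = "{0..ereal x} \<times> {ereal y<..\<infinity>}" and ?Q = "{ereal x<..\<infinity>} \<times> {ereal y<..\<infinity>}"
  have x_le: "{ereal x<..\<infinity>} \<subseteq> {0..\<infinity>}"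
    using x by (auto intro: ereal_nonneg_if_gt)
  have "{ereal y<..\<infinity>} \<subseteq> {ereal y..\<infinity>}" by auto
  then have "?P \<in> fmeasurable \<mu>" "?Q \<in> fmeasurable \<mu>"
    using y x_le by (auto intro!: Times_fmeasurable[of _ _ y])
  moreover have "{0..\<infinity>} \<times> {ereal y<..\<infinity>} = ?P \<union> ?Q" using x_le by auto
  moreover have "?P \<inter> ?Q = {}" by auto
  ultimately show ?thesis by (simp add: measure_Union fmeasurableD fmeasurableD2)
qed

lemma upper_rectangle_tendsto_zero:
  assumes "y > 0"
  shows "((\<lambda>x. measure \<mu> ({ereal x<..\<infinity>} \<times> {ereal y<..\<infinity>})) \<longlongrightarrow> 0) at_top"
proof -
  let ?F = "\<lambda>x. measure \<mu> ({0..ereal x} \<times> {ereal y<..\<infinity>})"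
  let ?L = "measure \<mu> ({0..\<infinity>} \<times> {ereal y<..\<infinity>})"
  have "(?F \<longlongrightarrow> ?L) at_top" using nondeg[OF assms] unfolding nondeg_df_def by blast
  then have "((\<lambda>x. ?L - ?F x) \<longlongrightarrow> 0) at_top"
    using tendsto_diff[OF tendsto_const, of ?F ?L at_top ?L] by simp
  moreover have "eventually (\<lambda>x. ?L - ?F x = measure \<mu> ({ereal x<..\<infinity>} \<times> {ereal y<..\<infinity>})) at_top"
    using eventually_ge_at_top[of 0]
    by eventually_elim (simp add: measure_upper_rectangle_eq[OF assms])
  ultimately show ?thesis by (rule Lim_transform_eventually)
qed

lemma measure_rectangle_gap:
  assumes y: "0 < y" "y \<le> 1" and x: "x > 0"
    and gap1: "measure \<mu> ({0..ereal x} \<times> {ereal 1<..\<infinity>}) < measure \<mu> ({0..\<infinity>} \<times> {ereal 1<..\<infinity>})"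
  shows "measure \<mu> ({0..ereal x} \<times> {ereal y..\<infinity>}) < measure \<mu> ({0..\<infinity>} \<times> {ereal y..\<infinity>})"
proof -
  let ?A = "{0..ereal x} \<times> {ereal y..\<infinity>}" and ?B = "{0..\<infinity>} \<times> {ereal y..\<infinity>}"
  let ?D = "{ereal x<..\<infinity>} \<times> {ereal y..\<infinity>}"
  have x_le: "{ereal x<..\<infinity>} \<subseteq> {0..\<infinity>}"
    using less_imp_le[OF x] by (auto intro: ereal_nonneg_if_gt)
  have "0 < measure \<mu> ({ereal x<..\<infinity>} \<times> {ereal 1<..\<infinity>})"
    using gap1 measure_upper_rectangle_eq[of 1 x] x by simp
  also have "\<dots> \<le> measure \<mu> ?D"
  proof (rule measure_mono_fmeasurable)
    show "{ereal x<..\<infinity>} \<times> {ereal 1<..\<infinity>} \<subseteq> ?D"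
      using y by (intro Sigma_mono ereal_greaterThan_subset_atLeast) auto
    show "{ereal x<..\<infinity>} \<times> {ereal 1<..\<infinity>} \<in> sets \<mu>"
      using x_le by (intro Times_in_sets_\<mu>[of _ _ 1]) auto
    show "?D \<in> fmeasurable \<mu>" using x_le y by (intro Times_fmeasurable[of _ _ y]) auto
  qed
  also have "measure \<mu> ?D = measure \<mu> ?B - measure \<mu> ?A"
  proof -
    have "?A \<in> fmeasurable \<mu>" "?D \<in> fmeasurable \<mu>"
      using x_le y by (auto intro!: Times_fmeasurable[of _ _ y])
    moreover have "?B = ?A \<union> ?D" using x_le by auto
    moreover have "?A \<inter> ?D = {}" by auto
    ultimately show ?thesis by (simp add: measure_Union fmeasurableD fmeasurableD2)
  qed
  finally show ?thesis by simp
qed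

lemma exists_rectangle_gap:
  obtains x y where "x > 0" "y > 0" "emeasure \<mu> ({0..\<infinity>} \<times> {ereal y}) = 0"
    "emeasure \<mu> ({ereal x} \<times> {ereal y..\<infinity>}) = 0"
    "measure \<mu> ({0..ereal x} \<times> {ereal y..\<infinity>}) < measure \<mu> ({0..\<infinity>} \<times> {ereal y..\<infinity>})"
proof -
  let ?F = "\<lambda>x. measure \<mu> ({0..ereal x} \<times> {ereal 1<..\<infinity>})"
  let ?L = "measure \<mu> ({0..\<infinity>} \<times> {ereal 1<..\<infinity>})"
  have F: "nondeg_df ?F ?L" using nondeg[of 1] by simp
  then obtain x0 where x0: "x0 \<ge> 0" "?F x0 < ?L" unfolding nondeg_df_def by blast
  with F have "(?F \<longlongrightarrow> ?F x0) (at_right x0)"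
    unfolding nondeg_df_def continuous_within by blast
  from order_tendstoD(2)[OF this x0(2)]
  obtain x' where x': "x' > x0" "\<And>x. x0 < x \<Longrightarrow> x < x' \<Longrightarrow> ?F x < ?L"
    using eventually_at_right[of x0 "x0 + 1"] by auto
  obtain y where y: "1/2 < y" "y < 1" "emeasure \<mu> ({0..\<infinity>} \<times> {ereal y}) = 0"
    using exists_null_row[of "1/2" "1/2" 1] by auto
  then have y_pos: "y > 0" by simp
  obtain x where x: "x0 < x" "x < x'" "emeasure \<mu> ({ereal x} \<times> {ereal y..\<infinity>}) = 0"
    using exists_null_column[OF y_pos x0(1) x'(1)] by blast
  then have "x > 0" using x0 by simp
  moreover have "measure \<mu> ({0..ereal x} \<times> {ereal y..\<infinity>}) < measure \<mu> ({0..\<infinity>} \<times> {ereal y..\<infinity>})"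
    using x'(2)[OF x(1,2)] y y_pos \<open>x > 0\<close> by (intro measure_rectangle_gap) auto
  ultimately show thesis using that y y_pos x by blast
qed

text \<open>Once \<open>\<alpha> t \<ge> b / x\<close>, the first coordinate \<open>(b - X) / \<alpha> t\<close> never exceeds \<open>x\<close>, so the
  two rectangles of the gap get the same \<open>\<nu> t\<close>-mass although their \<open>\<mu>\<close>-masses differ.\<close>
lemma \<alpha>_eventually_bounded:
  obtains B where "eventually (\<lambda>t. \<alpha> t < B) at_top"
proof -
  obtain x y where x: "x > 0" and y: "y > 0" "emeasure \<mu> ({0..\<infinity>} \<times> {ereal y}) = 0"
    and null: "emeasure \<mu> ({ereal x} \<times> {ereal y..\<infinity>}) = 0"
    and gap: "measure \<mu> ({0..ereal x} \<times> {ereal y..\<infinity>}) < measure \<mu> ({0..\<infinity>} \<times> {ereal y..\<infinity>})"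
    by (rule exists_rectangle_gap)
  let ?A = "{0..ereal x} \<times> {ereal y..\<infinity>}" and ?B = "{0..\<infinity>} \<times> {ereal y..\<infinity>}"
  have "((\<lambda>t. \<nu> t ?B - \<nu> t ?A) \<longlongrightarrow> measure \<mu> ?B - measure \<mu> ?A) at_top"
    using x y null less_imp_le[OF x] by (intro tendsto_diff \<nu>_rectangle_tendsto) auto
  from order_tendstoD(1)[OF this, of 0]
  have "eventually (\<lambda>t. \<nu> t ?A < \<nu> t ?B) at_top" using gap by simp
  then have "eventually (\<lambda>t. \<alpha> t < b / x) at_top"
    using eventually_gt_at_top[of 0]
  proof eventually_elim
    case (elim t)
    have \<alpha>_pos: "\<alpha> t > 0" using regvar_pos[OF \<alpha> elim(2)] .
    show ?case
    proof (rule ccontr)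
      assume "\<not> \<alpha> t < b / x"
      then have "b \<le> x * \<alpha> t" using x by (simp add: field_simps)
      then have "(b - X \<omega>) / \<alpha> t \<le> x" if "\<omega> \<in> space M" for \<omega>
        using X_nonneg[OF that] \<alpha>_pos by (simp add: divide_le_eq)
      then have "\<nu> t ?A = \<nu> t ?B"
        unfolding \<nu>_Times by (intro arg_cong[where f="\<lambda>A. t * prob A"] Collect_cong) auto
      then show False using elim(1) by simp
    qed
  qed
  then show thesis by (rule that)
qed

lemma \<alpha>_tendsto_zero: "(\<alpha> \<longlongrightarrow> 0) at_top"
  using \<alpha>_eventually_bounded regvar_neg_tendsto_zero[OF \<alpha> \<rho>] by metis

lemma exists_small_corner:
  assumes w: "w > 0" and e: "e > 0"
  obtains K w' where "K > 0" "0 < w'" "w' < w" "emeasure \<mu> ({0..\<infinity>} \<times> {ereal w'}) = 0"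
    "emeasure \<mu> ({ereal K} \<times> {ereal w'..\<infinity>}) = 0" "measure \<mu> ({ereal K..\<infinity>} \<times> {ereal w'..\<infinity>}) < e"
proof -
  obtain w' where w': "w/2 < w'" "w' < w" "emeasure \<mu> ({0..\<infinity>} \<times> {ereal w'}) = 0"
    using exists_null_row[of "w/2" "w/2" w] w by auto
  then have w'_pos: "w' > 0" using w by simp
  have "((\<lambda>x. measure \<mu> ({ereal x<..\<infinity>} \<times> {ereal (w/2)<..\<infinity>})) \<longlongrightarrow> 0) at_top"
    using w by (intro upper_rectangle_tendsto_zero) simp
  from order_tendstoD(2)[OF this e]
  obtain N where N: "\<And>x. x \<ge> N \<Longrightarrow> measure \<mu> ({ereal x<..\<infinity>} \<times> {ereal (w/2)<..\<infinity>}) < e"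
    unfolding eventually_at_top_linorder by blast
  define x0 where "x0 = max N 0"
  have "N \<le> x0" "0 \<le> x0" unfolding x0_def by simp_all
  then have x0: "x0 \<ge> 0" "measure \<mu> ({ereal x0<..\<infinity>} \<times> {ereal (w/2)<..\<infinity>}) < e"
    using N by auto
  obtain K where K: "x0 < K" "K < x0 + 1" "emeasure \<mu> ({ereal K} \<times> {ereal w'..\<infinity>}) = 0"
    using exists_null_column[OF w'_pos x0(1), of "x0 + 1"] by auto
  then have K_pos: "K > 0" using x0 by simp
  have "measure \<mu> ({ereal K..\<infinity>} \<times> {ereal w'..\<infinity>})
      \<le> measure \<mu> ({ereal x0<..\<infinity>} \<times> {ereal (w/2)<..\<infinity>})"
  proof (rule measure_mono_fmeasurable)
    show "{ereal K..\<infinity>} \<times> {ereal w'..\<infinity>} \<subseteq> {ereal x0<..\<infinity>} \<times> {ereal (w/2)<..\<infinity>}"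
      using K w' by (intro Sigma_mono ereal_atLeast_subset_greaterThan) auto
    show "{ereal K..\<infinity>} \<times> {ereal w'..\<infinity>} \<in> sets \<mu>"
      using K_pos w'_pos by (intro Times_in_sets_\<mu>[of _ _ w']) (auto intro: ereal_nonneg_if_ge)
    show "{ereal x0<..\<infinity>} \<times> {ereal (w/2)<..\<infinity>} \<in> fmeasurable \<mu>"
      using x0(1) w by (intro Times_fmeasurable[of _ _ "w/2"]) (auto intro: ereal_nonneg_if_gt)
  qed
  with x0(2) K_pos w'_pos w' K(3) show thesis by (intro that) auto
qed

lemma joint_tail_tendsto_zero:
  assumes \<delta>: "\<delta> > 0" and w: "w > 0"
  shows "((\<lambda>t. t * prob {\<omega>\<in>space M. X \<omega> \<le> b - \<delta> \<and> w < Y \<omega> / a t}) \<longlongrightarrow> 0) at_top"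
proof (rule order_tendstoI)
  fix e :: real assume "e < 0"
  show "eventually (\<lambda>t. e < t * prob {\<omega>\<in>space M. X \<omega> \<le> b - \<delta> \<and> w < Y \<omega> / a t}) at_top"
    using eventually_gt_at_top[of 0]
    by eventually_elim (use \<open>e < 0\<close> in \<open>simp add: less_le_trans[OF _ mult_nonneg_nonneg]\<close>)
next
  fix e :: real assume e: "e > 0"
  obtain K w' where K: "K > 0" "emeasure \<mu> ({ereal K} \<times> {ereal w'..\<infinity>}) = 0"
    and w': "0 < w'" "w' < w" "emeasure \<mu> ({0..\<infinity>} \<times> {ereal w'}) = 0"
    and small: "measure \<mu> ({ereal K..\<infinity>} \<times> {ereal w'..\<infinity>}) < e"
    using exists_small_corner[OF w e] by metis
  let ?R = "{ereal K..\<infinity>} \<times> {ereal w'..\<infinity>}"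
  have "eventually (\<lambda>t. \<nu> t ?R < e) at_top"
    using K w' by (intro order_tendstoD(2)[OF \<nu>_rectangle_tendsto small]) auto
  moreover have "eventually (\<lambda>t. \<alpha> t < \<delta> / K) at_top"
    using order_tendstoD(2)[OF \<alpha>_tendsto_zero] \<delta> K by simp
  ultimately show "eventually (\<lambda>t. t * prob {\<omega>\<in>space M. X \<omega> \<le> b - \<delta> \<and> w < Y \<omega> / a t} < e) at_top"
    using eventually_gt_at_top[of 0]
  proof eventually_elim
    case (elim t)
    have \<alpha>_pos: "\<alpha> t > 0" using regvar_pos[OF \<alpha> elim(3)] .
    have "{\<omega>\<in>space M. X \<omega> \<le> b - \<delta> \<and> w < Y \<omega> / a t}
        \<subseteq> {\<omega>\<in>space M. K \<le> (b - X \<omega>) / \<alpha> t \<and> w' \<le> Y \<omega> / a t}"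
    proof safe
      fix \<omega> assume "X \<omega> \<le> b - \<delta>" "w < Y \<omega> / a t"
      have "K < \<delta> / \<alpha> t" using elim(2) \<alpha>_pos K by (simp add: field_simps)
      also have "\<delta> / \<alpha> t \<le> (b - X \<omega>) / \<alpha> t"
        using \<open>X \<omega> \<le> b - \<delta>\<close> \<alpha>_pos by (intro divide_right_mono) auto
      finally show "K \<le> (b - X \<omega>) / \<alpha> t" by simp
      show "w' \<le> Y \<omega> / a t" using \<open>w < Y \<omega> / a t\<close> w' by simp
    qed
    then have "prob {\<omega>\<in>space M. X \<omega> \<le> b - \<delta> \<and> w < Y \<omega> / a t}
        \<le> prob {\<omega>\<in>space M. K \<le> (b - X \<omega>) / \<alpha> t \<and> w' \<le> Y \<omega> / a t}"
      by (rule finite_measure_mono) measurable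
    then have "t * prob {\<omega>\<in>space M. X \<omega> \<le> b - \<delta> \<and> w < Y \<omega> / a t} \<le> \<nu> t ?R"
      using elim(3) by (simp add: \<nu>_Times mult_left_mono)
    with elim(1) show ?case by simp
  qed
qed

lemma product_tail_le:
  assumes z: "z > 0" and t: "t > 0"
  shows "prob {\<omega>\<in>space M. X \<omega> * Y \<omega> / a t > z} \<le> prob {\<omega>\<in>space M. Y \<omega> / a t > z / b}"
proof -
  have a_pos: "a t > 0" using regvar_pos[OF a t] .
  have "{\<omega>\<in>space M. X \<omega> * Y \<omega> / a t > z}
      \<subseteq> {\<omega>\<in>space M. Y \<omega> / a t > z / b} \<union> {\<omega>\<in>space M. X \<omega> > b}"
  proof safe
    fix \<omega> assume \<omega>: "\<omega> \<in> space M" "X \<omega> * Y \<omega> / a t > z" "\<not> b < X \<omega>"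
    have "X \<omega> * Y \<omega> / a t \<le> b * (Y \<omega> / a t)"
      using \<omega> Y_nonneg[OF \<omega>(1)] a_pos by (simp add: mult_right_mono divide_right_mono)
    with \<omega>(2) b show "z / b < Y \<omega> / a t" by (simp add: divide_less_eq mult.commute)
  qed
  then have "prob {\<omega>\<in>space M. X \<omega> * Y \<omega> / a t > z}
      \<le> prob ({\<omega>\<in>space M. Y \<omega> / a t > z / b} \<union> {\<omega>\<in>space M. X \<omega> > b})"
    by (rule finite_measure_mono) measurable
  also have "\<dots> \<le> prob {\<omega>\<in>space M. Y \<omega> / a t > z / b} + prob {\<omega>\<in>space M. X \<omega> > b}"
    by (rule measure_Un_le) measurable
  finally show ?thesis using prob_X_gt_endpoint by simp
qed

lemma product_tail_ge:
  assumes \<delta>: "0 < \<delta>" "\<delta> < b" and z: "z > 0" and t: "t > 0"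
  shows "prob {\<omega>\<in>space M. Y \<omega> / a t > z / (b - \<delta>)} \<le> prob {\<omega>\<in>space M. X \<omega> * Y \<omega> / a t > z}
    + prob {\<omega>\<in>space M. X \<omega> \<le> b - \<delta> \<and> z / (b - \<delta>) < Y \<omega> / a t}"
proof -
  let ?w = "z / (b - \<delta>)"
  have "{\<omega>\<in>space M. Y \<omega> / a t > ?w} \<subseteq> {\<omega>\<in>space M. X \<omega> * Y \<omega> / a t > z}
      \<union> {\<omega>\<in>space M. X \<omega> \<le> b - \<delta> \<and> ?w < Y \<omega> / a t}"
  proof safe
    fix \<omega> assume \<omega>: "Y \<omega> / a t > ?w" "\<not> X \<omega> * Y \<omega> / a t > z"
    show "X \<omega> \<le> b - \<delta>"
    proof (rule ccontr)
      assume "\<not> X \<omega> \<le> b - \<delta>"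
      then have "(b - \<delta>) * ?w < X \<omega> * (Y \<omega> / a t)"
        using \<omega>(1) \<delta> z by (intro mult_strict_mono) auto
      with \<omega>(2) \<delta> show False by simp
    qed
  qed
  then have "prob {\<omega>\<in>space M. Y \<omega> / a t > ?w} \<le> prob ({\<omega>\<in>space M. X \<omega> * Y \<omega> / a t > z}
      \<union> {\<omega>\<in>space M. X \<omega> \<le> b - \<delta> \<and> ?w < Y \<omega> / a t})"
    by (rule finite_measure_mono) measurable
  also have "\<dots> \<le> prob {\<omega>\<in>space M. X \<omega> * Y \<omega> / a t > z}
      + prob {\<omega>\<in>space M. X \<omega> \<le> b - \<delta> \<and> ?w < Y \<omega> / a t}"
    by (rule measure_Un_le) measurable
  finally show ?thesis .
qed

lemma product_tail_eventually_less:
  assumes z: "z > 0" and c: "z powr (-1/\<gamma>) * b powr (1/\<gamma>) < c"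
  shows "eventually (\<lambda>t. t * prob {\<omega>\<in>space M. X \<omega> * Y \<omega> / a t > z} < c) at_top"
proof -
  have "((\<lambda>t. t * prob {\<omega>\<in>space M. Y \<omega> / a t > z / b}) \<longlongrightarrow> z powr (-1/\<gamma>) * b powr (1/\<gamma>)) at_top"
    using Y_tail[of "z / b"] z b powr_divide_minus[OF z b, of "1/\<gamma>"] by simp
  from order_tendstoD(2)[OF this c]
  show ?thesis
    using eventually_gt_at_top[of 0]
    by eventually_elim (use product_tail_le[OF z] in \<open>smt (verit) mult_left_mono\<close>)
qed

lemma product_tail_eventually_greater:
  assumes z: "z > 0" and c: "c < z powr (-1/\<gamma>) * b powr (1/\<gamma>)"
  shows "eventually (\<lambda>t. c < t * prob {\<omega>\<in>space M. X \<omega> * Y \<omega> / a t > z}) at_top"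
proof -
  obtain \<delta> where \<delta>: "0 < \<delta>" "\<delta> < b" "c < (z / (b - \<delta>)) powr (-1/\<gamma>)"
    using exists_endpoint_margin[OF z b, of c "-1/\<gamma>"] c powr_divide_minus[OF z b, of "1/\<gamma>"]
    by auto
  define w where "w = z / (b - \<delta>)"
  have w: "w > 0" unfolding w_def using z \<delta> by simp
  have "((\<lambda>t. t * prob {\<omega>\<in>space M. Y \<omega> / a t > w}
      - t * prob {\<omega>\<in>space M. X \<omega> \<le> b - \<delta> \<and> w < Y \<omega> / a t}) \<longlongrightarrow> w powr (-1/\<gamma>) - 0) at_top"
    by (intro tendsto_diff Y_tail joint_tail_tendsto_zero \<delta>(1) w)
  from order_tendstoD(1)[OF this] \<delta>(3)
  have "eventually (\<lambda>t. c < t * prob {\<omega>\<in>space M. Y \<omega> / a t > w}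
      - t * prob {\<omega>\<in>space M. X \<omega> \<le> b - \<delta> \<and> w < Y \<omega> / a t}) at_top"
    unfolding w_def by simp
  then show ?thesis
    using eventually_gt_at_top[of 0]
  proof eventually_elim
    case (elim t)
    have "t * prob {\<omega>\<in>space M. Y \<omega> / a t > w} \<le> t * (prob {\<omega>\<in>space M. X \<omega> * Y \<omega> / a t > z}
        + prob {\<omega>\<in>space M. X \<omega> \<le> b - \<delta> \<and> w < Y \<omega> / a t})"
      using product_tail_ge[OF \<delta>(1,2) z elim(2)] elim(2) unfolding w_def
      by (intro mult_left_mono) auto
    with elim(1) show ?case by (simp add: distrib_left)
  qed
qed

lemma product_tail_tendsto:
  "z > 0 \<Longrightarrow> ((\<lambda>t. t * prob {\<omega>\<in>space M. X \<omega> * Y \<omega> / a t > z})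
    \<longlongrightarrow> z powr (-1/\<gamma>) * b powr (1/\<gamma>)) at_top"
  by (intro order_tendstoI product_tail_eventually_less product_tail_eventually_greater)

lemma product_tail_antimono: "antimono (\<lambda>z. prob {\<omega>\<in>space M. X \<omega> * Y \<omega> > z})"
proof (rule antimonoI)
  fix z z' :: real assume "z \<le> z'"
  then show "prob {\<omega>\<in>space M. X \<omega> * Y \<omega> > z'} \<le> prob {\<omega>\<in>space M. X \<omega> * Y \<omega> > z}"
    by (intro finite_measure_mono) (auto, measurable)
qed

lemma product_tail_regvar: "regvar (-1/\<gamma>) (\<lambda>z. prob {\<omega>\<in>space M. X \<omega> * Y \<omega> > z})"
proof (rule regvar_of_scaled_tail_limit[OF product_tail_antimono a \<gamma>])
  show "b powr (1/\<gamma>) > 0" using b by simp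
  fix z :: real assume z: "z > 0"
  have "eventually (\<lambda>t. t * prob {\<omega>\<in>space M. X \<omega> * Y \<omega> / a t > z}
      = t * prob {\<omega>\<in>space M. X \<omega> * Y \<omega> > a t * z}) at_top"
    using eventually_gt_at_top[of 0]
    by eventually_elim (use regvar_pos[OF a] in \<open>simp add: pos_less_divide_eq mult.commute\<close>)
  from Lim_transform_eventually[OF product_tail_tendsto[OF z] this]
  show "((\<lambda>t. t * prob {\<omega>\<in>space M. X \<omega> * Y \<omega> > a t * z})
      \<longlongrightarrow> b powr (1/\<gamma>) * z powr (-1/\<gamma>)) at_top"
    by (simp add: mult.commute)
qed

end

theorem theorem5p11:
  fixes M :: "'a measure" and X Y :: "'a \<Rightarrow> real"
    and \<rho> \<gamma> b :: real and \<alpha> a :: "real \<Rightarrow> real"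
    and \<mu> :: "(ereal \<times> ereal) measure"
  assumes "prob_space M"
    and "\<rho> < 0" and "\<gamma> > 0"
    and "X \<in> borel_measurable M" and "Y \<in> borel_measurable M"
    and "\<forall>\<omega>\<in>space M. X \<omega> \<ge> 0" and "\<forall>\<omega>\<in>space M. Y \<omega> \<ge> 0"
    and "upper_endpoint M X b" and "b > 0"
    and "regvar \<rho> \<alpha>" and "regvar \<gamma> a"
    and "\<forall>y>0. ((\<lambda>t. t * measure M {\<omega>\<in>space M. Y \<omega> / a t > y})
                 \<longlongrightarrow> y powr (-1/\<gamma>)) at_top"
    and "radon_on_E \<mu>" and "emeasure \<mu> Espace \<noteq> 0"
    and "vague_conv_E
           (\<lambda>t A. t * measure M {\<omega>\<in>space M.
                     (ereal ((b - X \<omega>) / \<alpha> t), ereal (Y \<omega> / a t)) \<in> A}) \<mu>"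
    and "\<forall>y>0. nondeg_df (\<lambda>x. measure \<mu> ({0..ereal x} \<times> {ereal y<..\<infinity>}))
                         (measure \<mu> ({0..\<infinity>} \<times> {ereal y<..\<infinity>}))"
  shows "regvar (-1/\<gamma>) (\<lambda>z. measure M {\<omega>\<in>space M. X \<omega> * Y \<omega> > z}) \<and>
         (\<forall>z>0. ((\<lambda>t. t * measure M {\<omega>\<in>space M. X \<omega> * Y \<omega> / a t > z})
                 \<longlongrightarrow> z powr (-1/\<gamma>) * b powr (1/\<gamma>)) at_top)"
proof -
  interpret cev_product M X Y \<rho> \<gamma> b \<alpha> a \<mu>
    using assms unfolding cev_product_def cev_product_axioms_def by blast
  show ?thesis using product_tail_regvar product_tail_tendsto by blast
qed

end
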